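(* Let $(E,e)$ be a unital operator system, let $u$ be a unitary in $M_n(A_E)$, and let $x\in M_n(E)$ be a hermitian form with gap $g$. Then $uxu^*$ is a hermitian form with gap $g$, and $uxu^*\oplus e_n$ is equivalent to $x\oplus e_n$ as hermitian forms in $H(E,2n)$, i.e. $uxu^*\oplus e_n\sim_{2n} x\oplus e_n$.
   Context: A unital operator system $(E,e)$ is a matrix-ordered $*$-vector space with Archimedean matrix order unit $e$; $e_n=\mathrm{diag}(e,\dots,e)\in M_n(E)$. $C^*_{\mathrm{env}}(E)$ is its $C^*$-envelope with embedding $\iota_E$, through which $E$ is identified with a subspace of $C^*_{\mathrm{env}}(E)$. The multiplier $C^*$-algebra is $A_E=\{a\in C^*_{\mathrm{env}}(E): aE\subseteq E\}$. A self-adjoint $x\in M_n(E)$ is a hermitian form if there is $g>0$ with $|\psi^{(n)}(x)|\ge g\cdot\mathrm{id}^{\oplus n}$ for all pure and maximal ucp maps $\psi:E\to B(\mathcal H)$ (equivalently $|\iota_E^{(n)}(x)|\ge g\cdot 1$); $x$ has gap $g$ if this holds with constant $g$. $H(E,n)$ is the set of hermitian forms in $M_n(E)$; $x\sim_n x'$ means there is a norm-continuous path $[0,1]\to H(E,n)$ from $x$ to $x'$. For $x\in M_n(E)$, $x'\in M_{n'}(E)$, $x\oplus x'=\begin{pmatrix}x&0\\0&x'\end{pmatrix}\in M_{n+n'}(E)$. *)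

theory Defs
  imports "HOL-Analysis.Analysis"
begin

class cstar_algebra = real_normed_algebra_1 + banach +
  fixes scaleC :: "complex \<Rightarrow> 'a \<Rightarrow> 'a"
    and adj :: "'a \<Rightarrow> 'a"
  assumes scaleC_of_real: "scaleC (of_real r) x = scaleR r x"
    and scaleC_add_right: "scaleC a (x + y) = scaleC a x + scaleC a y"
    and scaleC_add_left: "scaleC (a + b) x = scaleC a x + scaleC b x"
    and scaleC_scaleC: "scaleC a (scaleC b x) = scaleC (a * b) x"
    and scaleC_one: "scaleC 1 x = x"
    and norm_scaleC: "norm (scaleC a x) = cmod a * norm x"
    and mult_scaleC_left: "scaleC a x * y = scaleC a (x * y)"
    and mult_scaleC_right: "x * scaleC a y = scaleC a (x * y)"
    and adj_adj: "adj (adj x) = x"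
    and adj_add: "adj (x + y) = adj x + adj y"
    and adj_mult: "adj (x * y) = adj y * adj x"
    and adj_scaleC: "adj (scaleC a x) = scaleC (cnj a) (adj x)"
    and cstar_identity: "norm (adj x * x) = norm x * norm x"

text \<open>An element of \<open>M_n(A)\<close> is represented as a function \<open>nat \<Rightarrow> nat \<Rightarrow> 'a\<close>
whose entries outside \<open>{0..<n} \<times> {0..<n}\<close> are zero.\<close>

type_synonym 'a mat = "nat \<Rightarrow> nat \<Rightarrow> 'a"

definition mat_in :: "nat \<Rightarrow> 'a::zero set \<Rightarrow> 'a mat \<Rightarrow> bool" where
  "mat_in n S X \<longleftrightarrow> (\<forall>i<n. \<forall>j<n. X i j \<in> S) \<and> (\<forall>i j. (n \<le> i \<or> n \<le> j) \<longrightarrow> X i j = 0)"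

definition mmult :: "nat \<Rightarrow> 'a::{times,comm_monoid_add} mat \<Rightarrow> 'a mat \<Rightarrow> 'a mat" where
  "mmult n X Y = (\<lambda>i j. \<Sum>k<n. X i k * Y k j)"

definition madj :: "'a::cstar_algebra mat \<Rightarrow> 'a mat" where
  "madj X = (\<lambda>i j. adj (X j i))"

text \<open>The unit \<open>1_n\<close> of \<open>M_n(A)\<close>; for an operator system with unit \<open>e = 1\<close>, this is \<open>e_n\<close>.\<close>
definition mone :: "nat \<Rightarrow> 'a::{zero,one} mat" where
  "mone n = (\<lambda>i j. if i = j \<and> i < n then 1 else 0)"

definition madd :: "'a::plus mat \<Rightarrow> 'a mat \<Rightarrow> 'a mat" where
  "madd X Y = (\<lambda>i j. X i j + Y i j)"

definition mdiff :: "'a::minus mat \<Rightarrow> 'a mat \<Rightarrow> 'a mat" where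
  "mdiff X Y = (\<lambda>i j. X i j - Y i j)"

definition mscale :: "real \<Rightarrow> 'a::real_vector mat \<Rightarrow> 'a mat" where
  "mscale r X = (\<lambda>i j. scaleR r (X i j))"

definition dsum :: "nat \<Rightarrow> nat \<Rightarrow> 'a::zero mat \<Rightarrow> 'a mat \<Rightarrow> 'a mat" where
  "dsum n n' x x' = (\<lambda>i j. if i < n \<and> j < n then x i j
       else if n \<le> i \<and> i < n + n' \<and> n \<le> j \<and> j < n + n' then x' (i - n) (j - n)
       else 0)"

definition mpos :: "nat \<Rightarrow> 'a::cstar_algebra mat \<Rightarrow> bool" where
  "mpos n P \<longleftrightarrow> (\<exists>Y. mat_in n UNIV Y \<and> P = mmult n (madj Y) Y)"

definition mle :: "nat \<Rightarrow> 'a::cstar_algebra mat \<Rightarrow> 'a mat \<Rightarrow> bool" where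
  "mle n X Y \<longleftrightarrow> mpos n (mdiff Y X)"

definition mnorm :: "nat \<Rightarrow> 'a::cstar_algebra mat \<Rightarrow> real" where
  "mnorm n X = Inf {t. 0 \<le> t \<and> mle n (mmult n (madj X) X) (mscale (t\<^sup>2) (mone n))}"

text \<open>\<open>|X| \<ge> g\<cdot>1_n\<close>, where \<open>|X|\<close> is the positive square root of \<open>X\<^sup>*X\<close>.\<close>
definition mabs_ge :: "nat \<Rightarrow> 'a::cstar_algebra mat \<Rightarrow> real \<Rightarrow> bool" where
  "mabs_ge n X g \<longleftrightarrow> (\<exists>C. mat_in n UNIV C \<and> mpos n C \<and> mmult n C C = mmult n (madj X) X
                          \<and> mle n (mscale g (mone n)) C)"

text \<open>A (concrete) unital operator system inside a C*-algebra: a self-adjoint complex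
subspace containing the unit (the unit \<open>e\<close> is identified with \<open>1\<close>).\<close>
definition opsys :: "'a::cstar_algebra set \<Rightarrow> bool" where
  "opsys E \<longleftrightarrow> 0 \<in> E \<and> 1 \<in> E \<and> (\<forall>x\<in>E. \<forall>y\<in>E. x + y \<in> E)
     \<and> (\<forall>c. \<forall>x\<in>E. scaleC c x \<in> E) \<and> (\<forall>x\<in>E. adj x \<in> E)"

definition star_subalg :: "'a::cstar_algebra set \<Rightarrow> bool" where
  "star_subalg S \<longleftrightarrow> 0 \<in> S \<and> 1 \<in> S \<and> (\<forall>x\<in>S. \<forall>y\<in>S. x + y \<in> S \<and> x * y \<in> S)
     \<and> (\<forall>c. \<forall>x\<in>S. scaleC c x \<in> S) \<and> (\<forall>x\<in>S. adj x \<in> S)"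

definition closed_ideal :: "'a::cstar_algebra set \<Rightarrow> bool" where
  "closed_ideal J \<longleftrightarrow> closed J \<and> 0 \<in> J \<and> (\<forall>x\<in>J. \<forall>y\<in>J. x + y \<in> J)
     \<and> (\<forall>c. \<forall>x\<in>J. scaleC c x \<in> J) \<and> (\<forall>a. \<forall>x\<in>J. a * x \<in> J \<and> x * a \<in> J)"

text \<open>A boundary ideal for \<open>E\<close>: the quotient map \<open>A \<rightarrow> A/J\<close> is completely isometric
on \<open>E\<close>; here \<open>M_n(A/J) \<cong> M_n(A)/M_n(J)\<close> with the quotient norm.\<close>
definition boundary_ideal :: "'a::cstar_algebra set \<Rightarrow> 'a set \<Rightarrow> bool" where
  "boundary_ideal E J \<longleftrightarrow> closed_ideal J \<and>
     (\<forall>n X. mat_in n E X \<longrightarrow> (INF K\<in>{K. mat_in n J K}. mnorm n (madd X K)) = mnorm n X)"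

text \<open>The ambient C*-algebra (the whole type) is the C*-envelope of \<open>E\<close>:
it is generated by \<open>E\<close> as a C*-algebra and the Shilov boundary ideal is trivial.\<close>
definition is_cstar_envelope :: "'a::cstar_algebra set \<Rightarrow> bool" where
  "is_cstar_envelope E \<longleftrightarrow> opsys E
     \<and> (\<forall>S. closed S \<and> star_subalg S \<and> E \<subseteq> S \<longrightarrow> S = UNIV)
     \<and> (\<forall>J. boundary_ideal E J \<longrightarrow> J = {0})"

definition multipliers :: "'a::cstar_algebra set \<Rightarrow> 'a set" where
  "multipliers E = {a. \<forall>x\<in>E. a * x \<in> E}"

definition munitary :: "nat \<Rightarrow> 'a::cstar_algebra set \<Rightarrow> 'a mat \<Rightarrow> bool" where
  "munitary n S u \<longleftrightarrow> mat_in n S u \<and> mmult n u (madj u) = mone n \<and> mmult n (madj u) u = mone n"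

definition hform_gap :: "'a::cstar_algebra set \<Rightarrow> nat \<Rightarrow> 'a mat \<Rightarrow> real \<Rightarrow> bool" where
  "hform_gap E n x g \<longleftrightarrow> mat_in n E x \<and> madj x = x \<and> 0 < g \<and> mabs_ge n x g"

definition H :: "'a::cstar_algebra set \<Rightarrow> nat \<Rightarrow> 'a mat set" where
  "H E n = {x. \<exists>g. hform_gap E n x g}"

definition hequiv :: "'a::cstar_algebra set \<Rightarrow> nat \<Rightarrow> 'a mat \<Rightarrow> 'a mat \<Rightarrow> bool" where
  "hequiv E n x x' \<longleftrightarrow> (\<exists>p :: real \<Rightarrow> 'a mat.
      p 0 = x \<and> p 1 = x' \<and> (\<forall>t\<in>{0..1}. p t \<in> H E n) \<and>
      (\<forall>t\<in>{0..1}. ((\<lambda>s. mnorm n (mdiff (p s) (p t))) \<longlongrightarrow> 0) (at t within {0..1})))"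

end

theory Submission
  imports Defs
begin

text \<open>Conjugation by a unitary \<open>w\<close> with entries in \<open>A\<^sub>E\<close> maps \<open>M\<^sub>n(E)\<close> into itself (the entries of
\<open>w\<close> act on the left, those of \<open>w\<^sup>*\<close> on the right) and carries a witness \<open>C\<close> for \<open>|x| \<ge> g\<close> to the
witness \<open>w C w\<^sup>*\<close> for \<open>|w x w\<^sup>*| \<ge> g\<close>. For the homotopy, let \<open>R(t)\<close> be the rotation by the angle
\<open>\<pi> t / 2\<close> acting on the two blocks of \<open>M\<^sub>2\<^sub>n\<close>. Then \<open>W(t) = R(t) (u \<oplus> 1) R(t)\<^sup>*\<close> is a unitary
over \<open>A\<^sub>E\<close> running from \<open>u \<oplus> 1\<close> to \<open>1 \<oplus> u\<close>, so \<open>W(t) (x \<oplus> 1) W(t)\<^sup>*\<close> is a path of hermitian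
forms (with gap \<open>min g 1\<close>) from \<open>u x u\<^sup>* \<oplus> 1\<close> to \<open>x \<oplus> u u\<^sup>* = x \<oplus> 1\<close>. The path is entrywise
continuous, and this suffices for norm continuity because \<open>\<parallel>D\<parallel> \<le> 2 \<Sum>\<^sub>i\<^sub>j \<parallel>D\<^sub>i\<^sub>j\<parallel>\<close>: if the
entrywise norm of a hermitian \<open>Z\<close> is at most \<open>1/4\<close>, the iteration \<open>Y \<mapsto> (Z + Y\<^sup>2) / 2\<close> converges
to some \<open>Y\<close> with \<open>(1 - Y)\<^sup>2 = 1 - Z\<close>, so \<open>1 - Z\<close> is positive.\<close>

lemma adj_zero [simp]: "adj 0 = (0::'a::cstar_algebra)"
  using adj_add[of "0::'a" 0] by simp

lemma adj_one [simp]: "adj 1 = (1::'a::cstar_algebra)"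
  by (metis adj_adj adj_mult mult_1_right)

lemma adj_uminus: "adj (- x) = - adj (x::'a::cstar_algebra)"
proof -
  have "adj x + adj (- x) = 0" using adj_add[of x "- x"] by simp
  then show ?thesis by (simp add: add_eq_0_iff)
qed

lemma adj_diff: "adj (x - y) = adj x - adj (y::'a::cstar_algebra)"
  unfolding diff_conv_add_uminus adj_add adj_uminus ..

lemma adj_scaleR: "adj (scaleR r x) = scaleR r (adj (x::'a::cstar_algebra))"
  using adj_scaleC[of "of_real r" x] by (simp add: scaleC_of_real)

lemma adj_sum: "adj (sum f K) = (\<Sum>k\<in>K. adj (f k::'a::cstar_algebra))"
  by (induction K rule: infinite_finite_induct) (auto simp: adj_add)

lemma norm_adj [simp]: "norm (adj x) = norm (x::'a::cstar_algebra)"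
proof -
  have le: "norm y \<le> norm (adj y)" for y :: 'a
  proof (cases "y = 0")
    case False
    have "norm y * norm y = norm (adj y * y)" by (simp add: cstar_identity)
    also have "\<dots> \<le> norm (adj y) * norm y" by (rule norm_mult_ineq)
    finally show ?thesis using False by simp
  qed simp
  show ?thesis using le[of x] le[of "adj x"] by (simp add: adj_adj)
qed

lemma bounded_linear_adj: "bounded_linear (adj::'a::cstar_algebra \<Rightarrow> 'a)"
  by (rule bounded_linear_intro[where K = 1]) (auto simp: adj_add adj_scaleR)

lemma tendsto_adj [tendsto_intros]:
  "(f \<longlongrightarrow> a) F \<Longrightarrow> ((\<lambda>s. adj (f s::'a::cstar_algebra)) \<longlongrightarrow> adj a) F"
  by (rule bounded_linear.tendsto[OF bounded_linear_adj])

definition mzero :: "'a::zero mat" where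
  "mzero = (\<lambda>i j. 0)"

abbreviation msquare :: "nat \<Rightarrow> 'a::zero mat \<Rightarrow> bool" where
  "msquare n X \<equiv> mat_in n UNIV X"

abbreviation mconj :: "nat \<Rightarrow> 'a::cstar_algebra mat \<Rightarrow> 'a mat \<Rightarrow> 'a mat" where
  "mconj n w X \<equiv> mmult n (mmult n w X) (madj w)"

lemma msquare_iff: "msquare n X \<longleftrightarrow> (\<forall>i j. n \<le> i \<or> n \<le> j \<longrightarrow> X i j = 0)"
  by (simp add: mat_in_def)

lemma mat_in_msquare: "mat_in n S X \<Longrightarrow> msquare n X"
  by (simp add: mat_in_def)

lemma mat_in_mone: "0 \<in> S \<Longrightarrow> 1 \<in> S \<Longrightarrow> mat_in n S (mone n)"
  by (auto simp: mat_in_def mone_def)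

lemma mat_in_mzero: "0 \<in> S \<Longrightarrow> mat_in n S mzero"
  by (simp add: mat_in_def mzero_def)

lemma mat_in_mscale_mone:
  "0 \<in> S \<Longrightarrow> of_real c \<in> S \<Longrightarrow> mat_in n S (mscale c (mone n) :: 'a::real_normed_algebra_1 mat)"
  by (auto simp: mat_in_def mscale_def mone_def of_real_def)

lemma msquare_mmult: "msquare n X \<Longrightarrow> msquare n Y \<Longrightarrow> msquare n (mmult n X (Y::'a::ring mat))"
  by (auto simp: msquare_iff mmult_def)

lemma msquare_madj: "msquare n X \<Longrightarrow> msquare n (madj (X::'a::cstar_algebra mat))"
  by (auto simp: msquare_iff madj_def)

lemma msquare_mscale: "msquare n X \<Longrightarrow> msquare n (mscale r (X::'a::real_vector mat))"
  by (auto simp: msquare_iff mscale_def)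

lemma msquare_madd: "msquare n X \<Longrightarrow> msquare n Y \<Longrightarrow> msquare n (madd X (Y::'a::monoid_add mat))"
  by (auto simp: msquare_iff madd_def)

lemma msquare_mdiff: "msquare n X \<Longrightarrow> msquare n Y \<Longrightarrow> msquare n (mdiff X (Y::'a::group_add mat))"
  by (auto simp: msquare_iff mdiff_def)

lemma msquare_mone [simp]: "msquare n (mone n)"
  and msquare_mzero [simp]: "msquare n mzero"
  by (simp_all add: mat_in_mone mat_in_mzero)

lemmas msquare_intros =
  msquare_mmult msquare_madj msquare_mscale msquare_madd msquare_mdiff msquare_mone msquare_mzero

lemma mmult_assoc: "mmult n (mmult n X Y) Z = mmult n X (mmult n Y (Z::'a::ring mat))"
  unfolding mmult_def
  by (auto intro!: ext simp: sum_distrib_left sum_distrib_right mult.assoc intro: sum.swap)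

lemma madj_madj [simp]: "madj (madj X) = X"
  by (simp add: madj_def adj_adj)

lemma madj_mmult: "madj (mmult n X Y) = mmult n (madj Y) (madj X)"
  by (auto intro!: ext simp: mmult_def madj_def adj_sum adj_mult)

lemma madj_mone [simp]: "madj (mone n) = (mone n :: 'a::cstar_algebra mat)"
  by (auto intro!: ext simp: madj_def mone_def)

lemma madj_mzero [simp]: "madj mzero = (mzero :: 'a::cstar_algebra mat)"
  by (simp add: madj_def mzero_def)

lemma madj_mscale [simp]: "madj (mscale r X) = mscale r (madj (X::'a::cstar_algebra mat))"
  by (simp add: madj_def mscale_def adj_scaleR)

lemma madj_madd: "madj (madd X Y) = madd (madj X) (madj (Y::'a::cstar_algebra mat))"
  by (simp add: madj_def madd_def adj_add)

lemma madj_mdiff: "madj (mdiff X Y) = mdiff (madj X) (madj (Y::'a::cstar_algebra mat))"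
  by (simp add: madj_def mdiff_def adj_diff)

lemma mmult_mone_left [simp]: "msquare n X \<Longrightarrow> mmult n (mone n) X = (X::'a::ring_1 mat)"
proof (intro ext)
  fix i j
  assume "msquare n X"
  then show "mmult n (mone n) X i j = X i j"
  proof (cases "i < n")
    case True
    have "mmult n (mone n) X i j = (\<Sum>k<n. if k = i then X k j else 0)"
      unfolding mmult_def mone_def by (intro sum.cong) auto
    then show ?thesis using True by simp
  qed (use \<open>msquare n X\<close> in \<open>auto simp: msquare_iff mmult_def mone_def\<close>)
qed

lemma mmult_mone_right [simp]: "msquare n X \<Longrightarrow> mmult n X (mone n) = (X::'a::ring_1 mat)"
  unfolding mmult_def mone_def msquare_iff by (auto intro!: ext simp: if_distrib cong: if_cong)

lemma mmult_mzero_left [simp]: "mmult n mzero X = (mzero::'a::ring mat)"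
  by (simp add: mmult_def mzero_def)

lemma mmult_mzero_right [simp]: "mmult n X mzero = (mzero::'a::ring mat)"
  by (simp add: mmult_def mzero_def)

lemma mmult_mdiff_left: "mmult n (mdiff X Y) Z = mdiff (mmult n X Z) (mmult n Y (Z::'a::ring mat))"
  by (auto intro!: ext simp: mmult_def mdiff_def left_diff_distrib sum_subtractf)

lemma mmult_mdiff_right: "mmult n Z (mdiff X Y) = mdiff (mmult n Z X) (mmult n Z (Y::'a::ring mat))"
  by (auto intro!: ext simp: mmult_def mdiff_def right_diff_distrib sum_subtractf)

lemma mmult_mscale_left [simp]:
  "mmult n (mscale r X) Z = mscale r (mmult n X (Z::'a::real_normed_algebra mat))"
  by (auto intro!: ext simp: mmult_def mscale_def scaleR_sum_right)

lemma mmult_mscale_right [simp]: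
  "mmult n Z (mscale r X) = mscale r (mmult n Z (X::'a::real_normed_algebra mat))"
  by (auto intro!: ext simp: mmult_def mscale_def scaleR_sum_right)

lemma madd_mzero [simp]: "madd X mzero = X" "madd mzero X = (X::'a::monoid_add mat)"
  by (simp_all add: madd_def mzero_def)

lemma mdiff_self [simp]: "mdiff X X = (mzero::'a::group_add mat)"
  by (simp add: mdiff_def mzero_def)

lemma mscale_mscale [simp]: "mscale a (mscale b X) = mscale (a * b) (X::'a::real_vector mat)"
  by (simp add: mscale_def)

lemma mscale_one [simp]: "mscale 1 X = (X::'a::real_vector mat)"
  by (simp add: mscale_def)

lemma mscale_zero [simp]: "mscale 0 X = (mzero::'a::real_vector mat)"
  by (simp add: mscale_def mzero_def)

lemma mscale_mzero [simp]: "mscale a mzero = (mzero::'a::real_vector mat)"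
  by (simp add: mscale_def mzero_def)

lemma madd_mscale [simp]: "madd (mscale a X) (mscale b X) = mscale (a + b) (X::'a::real_vector mat)"
  by (simp add: mscale_def madd_def scaleR_add_left)

lemma mdiff_mscale [simp]: "mdiff X (mscale b X) = mscale (1 - b) (X::'a::real_vector mat)"
  by (simp add: mscale_def mdiff_def scaleR_diff_left)

lemma madj_mconj: "madj (mconj n w X) = mconj n w (madj X)"
  by (simp add: madj_mmult mmult_assoc)

lemma mconj_mone_left [simp]: "msquare n X \<Longrightarrow> mconj n (mone n) X = (X::'a::cstar_algebra mat)"
  by simp

lemma mconj_mdiff: "mconj n w (mdiff X Y) = mdiff (mconj n w X) (mconj n w Y)"
  by (simp add: mmult_mdiff_left mmult_mdiff_right)

lemma munitary_iff_mat_in: "munitary n S w \<longleftrightarrow> mat_in n S w \<and> munitary n UNIV w"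
  by (auto simp: munitary_def mat_in_def)

lemma munitary_mone: "munitary n UNIV (mone n :: 'a::cstar_algebra mat)"
  by (simp add: munitary_def msquare_intros)

lemma munitary_madj: "munitary n UNIV w \<Longrightarrow> munitary n UNIV (madj w)"
  by (simp add: munitary_def msquare_madj)

lemma mmult_munitary_cancel:
  assumes "munitary n UNIV w" and "msquare n X"
  shows "mmult n (madj w) (mmult n w X) = X" and "mmult n w (mmult n (madj w) X) = X"
  using assms by (simp_all add: munitary_def mmult_assoc[symmetric])

lemma munitary_mmult:
  assumes "munitary n UNIV v" and "munitary n UNIV w"
  shows "munitary n UNIV (mmult n v w)"
  using assms mmult_munitary_cancel[OF assms(1)] mmult_munitary_cancel[OF assms(2)]
  by (auto simp: munitary_def madj_mmult mmult_assoc msquare_intros)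

lemma munitary_mconj: "munitary n UNIV v \<Longrightarrow> munitary n UNIV w \<Longrightarrow> munitary n UNIV (mconj n v w)"
  by (intro munitary_mmult munitary_madj)

lemma mconj_mscale_mone:
  "munitary n UNIV w \<Longrightarrow> mconj n w (mscale c (mone n)) = mscale c (mone n)"
  by (simp add: munitary_def)

lemma mmult_mconj:
  assumes "munitary n UNIV w" and "msquare n Y"
  shows "mmult n (mconj n w X) (mconj n w Y) = mconj n w (mmult n X Y)"
  using mmult_munitary_cancel(1)[OF assms(1) msquare_mmult[OF assms(2) msquare_madj]] assms(1)
  by (simp add: mmult_assoc munitary_def)

lemma mpos_mconj: "mpos n P \<Longrightarrow> msquare n w \<Longrightarrow> mpos n (mconj n w P)"
  unfolding mpos_def
  by (metis madj_madj madj_mmult mmult_assoc msquare_intros(1,2))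

lemma mle_mconj:
  "munitary n UNIV w \<Longrightarrow> mle n (mscale c (mone n)) X \<Longrightarrow> mle n (mscale c (mone n)) (mconj n w X)"
  unfolding mle_def munitary_def
  by (metis mconj_mdiff mconj_mscale_mone[unfolded munitary_def] mpos_mconj)

lemma mpos_mone: "mpos n (mone n :: 'a::cstar_algebra mat)"
  unfolding mpos_def by (intro exI[of _ "mone n"]) (simp add: msquare_intros)

lemma mpos_mscale:
  assumes "0 \<le> c" and "mpos n P"
  shows "mpos n (mscale c P)"
proof -
  obtain Y where "msquare n Y" and P: "P = mmult n (madj Y) Y"
    using assms(2) unfolding mpos_def by blast
  moreover have "mscale c P = mmult n (madj (mscale (sqrt c) Y)) (mscale (sqrt c) Y)"
    using assms(1) by (simp add: P)
  ultimately show ?thesis unfolding mpos_def by (blast intro: msquare_mscale)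
qed

definition blk :: "nat \<Rightarrow> 'a::zero mat \<Rightarrow> 'a mat \<Rightarrow> 'a mat \<Rightarrow> 'a mat \<Rightarrow> 'a mat" where
  "blk n A B C D = (\<lambda>i j. if i < n \<and> j < n then A i j
     else if i < n \<and> n \<le> j \<and> j < n + n then B i (j - n)
     else if n \<le> i \<and> i < n + n \<and> j < n then C (i - n) j
     else if n \<le> i \<and> i < n + n \<and> n \<le> j \<and> j < n + n then D (i - n) (j - n) else 0)"

lemma blk_entries:
  "i < n \<Longrightarrow> j < n \<Longrightarrow> blk n A B C D i j = A i j"
  "i < n \<Longrightarrow> j < n \<Longrightarrow> blk n A B C D i (n + j) = B i j"
  "i < n \<Longrightarrow> j < n \<Longrightarrow> blk n A B C D (n + i) j = C i j"
  "i < n \<Longrightarrow> j < n \<Longrightarrow> blk n A B C D (n + i) (n + j) = D i j"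
  "n + n \<le> i \<Longrightarrow> blk n A B C D i j = 0"
  "n + n \<le> j \<Longrightarrow> blk n A B C D i j = 0"
  by (simp_all add: blk_def)

lemma block_index_cases:
  fixes i n :: nat
  obtains "i < n" | i' where "i = n + i'" "i' < n" | "n + n \<le> i"
  by (metis add_less_cancel_left le_add_diff_inverse not_less)

lemma sum_lessThan_add: "(\<Sum>k<(a::nat) + b. f k) = (\<Sum>k<a. f k) + (\<Sum>k<b. f (a + k))"
  by (induction b) (simp_all add: add.assoc)

lemma mmult_blk:
  "mmult (n + n) (blk n A B C D) (blk n A' B' C' D') =
   blk n (madd (mmult n A A') (mmult n B C')) (madd (mmult n A B') (mmult n B D'))
         (madd (mmult n C A') (mmult n D C')) (madd (mmult n C B') (mmult n D (D'::'a::ring mat)))"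
proof (intro ext)
  fix i j
  show "mmult (n + n) (blk n A B C D) (blk n A' B' C' D') i j =
    blk n (madd (mmult n A A') (mmult n B C')) (madd (mmult n A B') (mmult n B D'))
          (madd (mmult n C A') (mmult n D C')) (madd (mmult n C B') (mmult n D D')) i j"
    unfolding mmult_def sum_lessThan_add
    by (rule block_index_cases[of i n]; rule block_index_cases[of j n])
       (simp_all add: blk_entries madd_def)
qed

lemma madj_blk: "madj (blk n A B C D) = blk n (madj A) (madj C) (madj B) (madj (D::'a::cstar_algebra mat))"
  by (auto intro!: ext simp: madj_def blk_def)

lemma mat_in_blk:
  "0 \<in> S \<Longrightarrow> mat_in n S A \<Longrightarrow> mat_in n S B \<Longrightarrow> mat_in n S C \<Longrightarrow> mat_in n S D \<Longrightarrow>
   mat_in (n + n) S (blk n A B C D)"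
  by (auto simp: mat_in_def blk_def)

lemma dsum_eq_blk: "dsum n n A B = blk n A mzero mzero B"
  by (auto intro!: ext simp: dsum_def blk_def mzero_def)

lemma mone_dsum: "mone (n + n) = dsum n n (mone n) (mone n :: 'a::{zero,one} mat)"
  by (auto intro!: ext simp: mone_def dsum_def)

lemma mat_in_dsum: "0 \<in> S \<Longrightarrow> mat_in n S A \<Longrightarrow> mat_in n S B \<Longrightarrow> mat_in (n + n) S (dsum n n A B)"
  by (auto simp: mat_in_def dsum_def)

lemma mmult_dsum:
  "mmult (n + n) (dsum n n A B) (dsum n n C D) = dsum n n (mmult n A C) (mmult n B (D::'a::ring mat))"
  by (simp add: dsum_eq_blk mmult_blk)

lemma madj_dsum: "madj (dsum n n A B) = dsum n n (madj A) (madj (B::'a::cstar_algebra mat))"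
  by (simp add: dsum_eq_blk madj_blk)

lemma mdiff_dsum: "mdiff (dsum n n A B) (dsum n n C D) = dsum n n (mdiff A C) (mdiff B (D::'a::group_add mat))"
  by (auto intro!: ext simp: mdiff_def dsum_def)

lemma mscale_dsum: "mscale c (dsum n n A B) = dsum n n (mscale c A) (mscale c (B::'a::real_vector mat))"
  by (auto intro!: ext simp: mscale_def dsum_def)

lemma mconj_dsum:
  "mconj (n + n) (dsum n n v w) (dsum n n X Y) = dsum n n (mconj n v X) (mconj n w Y)"
  by (simp add: mmult_dsum madj_dsum)

lemma munitary_dsum:
  assumes "munitary n UNIV v" and "munitary n UNIV w"
  shows "munitary (n + n) UNIV (dsum n n v w)"
  using assms by (simp add: munitary_def mat_in_dsum mmult_dsum madj_dsum mone_dsum)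

lemma mpos_dsum:
  assumes "mpos n P" and "mpos n Q"
  shows "mpos (n + n) (dsum n n P Q)"
proof -
  obtain Y Z where "msquare n Y" "P = mmult n (madj Y) Y" "msquare n Z" "Q = mmult n (madj Z) Z"
    using assms unfolding mpos_def by blast
  then show ?thesis
    unfolding mpos_def by (intro exI[of _ "dsum n n Y Z"]) (simp add: mat_in_dsum mmult_dsum madj_dsum)
qed

text \<open>Writing \<open>Y\<^sup>* Y + Z\<^sup>* Z = V\<^sup>* V\<close> with \<open>V \<in> M\<^sub>n\<close> would need a square root; instead the sum is
the corner of \<open>W\<^sup>* W\<close> for \<open>W = [Y 0; Z 0] \<in> M\<^sub>2\<^sub>n\<close>.\<close>

lemma mpos_dsum_madd:
  assumes "mpos n P" and "mpos n Q"
  shows "mpos (n + n) (dsum n n (madd P Q) mzero)"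
proof -
  obtain Y Z where "msquare n Y" "P = mmult n (madj Y) Y" "msquare n Z" "Q = mmult n (madj Z) Z"
    using assms unfolding mpos_def by blast
  then show ?thesis
    unfolding mpos_def
    by (intro exI[of _ "blk n Y mzero Z mzero"])
       (simp add: mat_in_blk mat_in_mzero dsum_eq_blk madj_blk mmult_blk)
qed

lemma of_real_in_multipliers: "opsys E \<Longrightarrow> of_real c \<in> multipliers E"
  by (auto simp: multipliers_def opsys_def of_real_def) (metis scaleC_of_real)

lemma zero_in_multipliers: "opsys E \<Longrightarrow> 0 \<in> multipliers E"
  using of_real_in_multipliers[of E 0] by simp

lemma one_in_multipliers: "1 \<in> multipliers E"
  by (simp add: multipliers_def)

lemma opsys_sum: "opsys E \<Longrightarrow> (\<And>k. k \<in> K \<Longrightarrow> f k \<in> E) \<Longrightarrow> sum f K \<in> E"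
  by (induction K rule: infinite_finite_induct) (auto simp: opsys_def)

lemma mat_in_multipliers_mmult:
  assumes "opsys E" and "mat_in n (multipliers E) X" and "mat_in n (multipliers E) Y"
  shows "mat_in n (multipliers E) (mmult n X Y)"
  using assms unfolding mat_in_def mmult_def multipliers_def
  by (auto simp: sum_distrib_right mult.assoc intro!: opsys_sum)

lemma mat_in_mmult_multipliers:
  assumes E: "opsys E" and w: "mat_in n (multipliers E) w" and X: "mat_in n E X"
  shows "mat_in n E (mmult n w X)"
  using w X unfolding mat_in_def mmult_def
  by (auto intro!: opsys_sum[OF E] simp: multipliers_def)

lemma mat_in_mmult_madj_multipliers:
  assumes E: "opsys E" and w: "mat_in n (multipliers E) w" and X: "mat_in n E X"
  shows "mat_in n E (mmult n X (madj w))"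
proof -
  have "x * adj a \<in> E" if "a \<in> multipliers E" "x \<in> E" for a x
  proof -
    have "a * adj x \<in> E" using that E by (simp add: multipliers_def opsys_def)
    then have "adj (a * adj x) \<in> E" using E by (simp add: opsys_def)
    then show ?thesis by (simp add: adj_mult adj_adj)
  qed
  then show ?thesis
    using w X unfolding mat_in_def mmult_def madj_def by (auto intro!: opsys_sum[OF E])
qed

section \<open>Hermitian forms\<close>

lemma mabs_ge_mconj:
  assumes w: "munitary n UNIV w" and X: "msquare n X" and gap: "mabs_ge n X g"
  shows "mabs_ge n (mconj n w X) g"
proof -
  obtain C where C: "msquare n C" "mpos n C" "mmult n C C = mmult n (madj X) X"
      "mle n (mscale g (mone n)) C"
    using gap unfolding mabs_ge_def by blast
  have w_sq: "msquare n w" using w by (simp add: munitary_def)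
  have "mmult n (mconj n w C) (mconj n w C) = mmult n (madj (mconj n w X)) (mconj n w X)"
    using w C(1,3) X by (simp add: madj_mconj mmult_mconj)
  then show ?thesis
    unfolding mabs_ge_def using C w w_sq
    by (intro exI[of _ "mconj n w C"]) (simp add: msquare_intros mpos_mconj mle_mconj)
qed

lemma hform_gap_mconj:
  assumes E: "opsys E" and w: "munitary n (multipliers E) w" and x: "hform_gap E n X g"
  shows "hform_gap E n (mconj n w X) g"
proof -
  have w_A: "mat_in n (multipliers E) w" and w_U: "munitary n UNIV w"
    using w by (simp_all add: munitary_iff_mat_in[of n "multipliers E"])
  have X: "mat_in n E X" "madj X = X" "0 < g" "mabs_ge n X g"
    using x by (simp_all add: hform_gap_def)
  show ?thesis
    unfolding hform_gap_def
    using X mabs_ge_mconj[OF w_U mat_in_msquare[OF X(1)] X(4)]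
    by (simp add: mat_in_mmult_madj_multipliers[OF E w_A] mat_in_mmult_multipliers[OF E w_A] madj_mconj)
qed

lemma mabs_ge_dsum_mone:
  fixes X :: "'a::cstar_algebra mat"
  assumes gap: "mabs_ge n X g" and "0 < g"
  shows "mabs_ge (n + n) (dsum n n X (mone n)) (min g 1)"
proof -
  obtain C where C: "msquare n C" "mpos n C" "mmult n C C = mmult n (madj X) X"
      and C_ge: "mpos n (mdiff C (mscale g (mone n)))"
    using gap unfolding mabs_ge_def mle_def by blast
  have "mle (n + n) (mscale (min g 1) (mone (n + n))) (dsum n n C (mone n))"
  proof (cases "g \<le> 1")
    case True
    have "mpos n (mscale (1 - g) (mone n))" using True by (intro mpos_mscale mpos_mone) simp
    then have "mpos (n + n) (dsum n n (mdiff C (mscale g (mone n))) (mscale (1 - g) (mone n)))"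
      using C_ge by (rule mpos_dsum[rotated])
    then show ?thesis
      using True by (simp add: mle_def mone_dsum mscale_dsum mdiff_dsum)
  next
    case False
    have "mdiff C (mone n) = madd (mscale (1 - 1 / g) C) (mscale (1 / g) (mdiff C (mscale g (mone n))))"
      using \<open>0 < g\<close>
      by (intro ext) (simp add: madd_def mscale_def mdiff_def scaleR_diff_left scaleR_diff_right)
    moreover have "mpos (n + n) (dsum n n (madd (mscale (1 - 1 / g) C)
                      (mscale (1 / g) (mdiff C (mscale g (mone n))))) mzero)"
      using C(2) C_ge False by (intro mpos_dsum_madd mpos_mscale) auto
    ultimately show ?thesis
      using False by (simp add: mle_def mone_dsum mdiff_dsum)
  qed
  then show ?thesis
    unfolding mabs_ge_def using C
    by (intro exI[of _ "dsum n n C (mone n)"])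
       (simp add: mat_in_dsum msquare_intros mpos_dsum mpos_mone mmult_dsum madj_dsum)
qed

lemma hform_gap_dsum_mone:
  assumes "opsys E" and "hform_gap E n X g"
  shows "hform_gap E (n + n) (dsum n n X (mone n)) (min g 1)"
  using assms mabs_ge_dsum_mone[of n X g]
  by (auto simp: hform_gap_def opsys_def madj_dsum intro!: mat_in_dsum mat_in_mone)

definition enorm :: "nat \<Rightarrow> 'a::real_normed_vector mat \<Rightarrow> real" where
  "enorm n X = (\<Sum>i<n. \<Sum>j<n. norm (X i j))"

lemma enorm_nonneg: "0 \<le> enorm n X"
  by (simp add: enorm_def sum_nonneg)

lemma norm_entry_le_enorm: "i < n \<Longrightarrow> j < n \<Longrightarrow> norm (X i j) \<le> enorm n X"
proof -
  assume ij: "i < n" "j < n"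
  have "norm (X i j) \<le> (\<Sum>j<n. norm (X i j))" using ij(2) by (intro member_le_sum) auto
  also have "\<dots> \<le> enorm n X"
    unfolding enorm_def using ij(1) by (intro member_le_sum[of i]) (auto intro: sum_nonneg)
  finally show ?thesis .
qed

lemma enorm_madd: "enorm n (madd X Y) \<le> enorm n X + enorm n Y"
  unfolding enorm_def madd_def sum.distrib[symmetric] by (intro sum_mono norm_triangle_ineq)

lemma enorm_mscale: "enorm n (mscale r X) = \<bar>r\<bar> * enorm n X"
  by (simp add: enorm_def mscale_def sum_distrib_left)

lemma enorm_madj: "enorm n (madj X) = enorm n (X::'a::cstar_algebra mat)"
  unfolding enorm_def madj_def norm_adj by (rule sum.swap)

lemma enorm_mmult: "enorm n (mmult n X Y) \<le> enorm n X * enorm n (Y::'a::real_normed_algebra mat)"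
proof -
  have "enorm n (mmult n X Y) \<le> (\<Sum>i<n. \<Sum>j<n. \<Sum>k<n. norm (X i k) * norm (Y k j))"
    unfolding enorm_def mmult_def by (intro sum_mono order.trans[OF norm_sum] norm_mult_ineq)
  also have "\<dots> = (\<Sum>i<n. \<Sum>k<n. norm (X i k) * (\<Sum>j<n. norm (Y k j)))"
    by (rule sum.cong[OF refl], subst sum.swap, simp only: sum_distrib_left)
  also have "\<dots> \<le> (\<Sum>i<n. \<Sum>k<n. norm (X i k) * enorm n Y)"
    unfolding enorm_def
    by (intro sum_mono mult_left_mono member_le_sum[of _ "{..<n}" "\<lambda>k. \<Sum>j<n. norm (Y k j)"])
       (auto intro: sum_nonneg)
  also have "\<dots> = enorm n X * enorm n Y"
    by (simp add: enorm_def sum_distrib_right)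
  finally show ?thesis .
qed

definition mtendsto :: "'b filter \<Rightarrow> ('b \<Rightarrow> 'a::topological_space mat) \<Rightarrow> 'a mat \<Rightarrow> bool" where
  "mtendsto F P A \<longleftrightarrow> (\<forall>i j. ((\<lambda>s. P s i j) \<longlongrightarrow> A i j) F)"

lemma mtendsto_unique:
  fixes P :: "'b \<Rightarrow> 'a::t2_space mat"
  assumes "F \<noteq> bot" and "mtendsto F P A" and "mtendsto F P B"
  shows "A = B"
proof (intro ext)
  fix i j
  show "A i j = B i j"
    using assms(2,3) unfolding mtendsto_def by (intro tendsto_unique[OF assms(1), of "\<lambda>s. P s i j"]) auto
qed

lemma mtendsto_const: "mtendsto F (\<lambda>s. A) A"
  by (simp add: mtendsto_def)

lemma mtendsto_mmult:
  "mtendsto F P A \<Longrightarrow> mtendsto F Q B \<Longrightarrow>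
   mtendsto F (\<lambda>s. mmult n (P s) (Q s)) (mmult n A (B::'a::real_normed_algebra mat))"
  by (auto simp: mtendsto_def mmult_def intro!: tendsto_intros)

lemma mtendsto_madj: "mtendsto F P A \<Longrightarrow> mtendsto F (\<lambda>s. madj (P s)) (madj (A::'a::cstar_algebra mat))"
  by (auto simp: mtendsto_def madj_def intro!: tendsto_intros)

lemma mtendsto_mscale:
  "(f \<longlongrightarrow> c) F \<Longrightarrow> mtendsto F (\<lambda>s. mscale (f s) X) (mscale c (X::'a::real_normed_vector mat))"
  by (auto simp: mtendsto_def mscale_def intro!: tendsto_intros)

lemma mtendsto_blk:
  "mtendsto F PA A \<Longrightarrow> mtendsto F PB B \<Longrightarrow> mtendsto F PC C \<Longrightarrow> mtendsto F PD D \<Longrightarrow>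
   mtendsto F (\<lambda>s. blk n (PA s) (PB s) (PC s) (PD s)) (blk n A B C (D::'a::{zero,topological_space} mat))"
  unfolding mtendsto_def blk_def by auto

lemma tendsto_enorm_mdiff:
  fixes P :: "'b \<Rightarrow> 'a::real_normed_vector mat"
  assumes "mtendsto F P A"
  shows "((\<lambda>s. enorm n (mdiff (P s) A)) \<longlongrightarrow> 0) F"
proof -
  have "((\<lambda>s. \<Sum>i<n. \<Sum>j<n. norm (P s i j - A i j)) \<longlongrightarrow> (\<Sum>i<n. \<Sum>j<n. norm (0::'a))) F"
    using assms unfolding mtendsto_def by (intro tendsto_sum tendsto_norm LIM_zero) auto
  then show ?thesis by (simp add: enorm_def mdiff_def)
qed

text \<open>Each entry is the partial sum of an absolutely summable series.\<close>

lemma contractive_imp_mtendsto: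
  fixes Y :: "nat \<Rightarrow> 'a::banach mat"
  assumes sq: "\<And>k. msquare n (Y k)" and "0 \<le> q" "q < 1"
    and step: "\<And>k. enorm n (mdiff (Y (Suc (Suc k))) (Y (Suc k))) \<le> q * enorm n (mdiff (Y (Suc k)) (Y k))"
  shows "\<exists>L. mtendsto sequentially Y L"
proof -
  define c where "c = enorm n (mdiff (Y 1) (Y 0))"
  have geom: "enorm n (mdiff (Y (Suc k)) (Y k)) \<le> c * q ^ k" for k
  proof (induction k)
    case (Suc k)
    have "enorm n (mdiff (Y (Suc (Suc k))) (Y (Suc k))) \<le> q * enorm n (mdiff (Y (Suc k)) (Y k))"
      by (rule step)
    also have "\<dots> \<le> q * (c * q ^ k)" using Suc \<open>0 \<le> q\<close> by (rule mult_left_mono)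
    finally show ?case by (simp add: mult.left_commute)
  qed (simp add: c_def)
  have "norm (Y (Suc k) i j - Y k i j) \<le> c * q ^ k" for k i j
  proof (cases "i < n \<and> j < n")
    case True
    then have "norm (mdiff (Y (Suc k)) (Y k) i j) \<le> enorm n (mdiff (Y (Suc k)) (Y k))"
      by (intro norm_entry_le_enorm) auto
    then show ?thesis using geom[of k] unfolding mdiff_def by linarith
  next
    case False
    have "0 \<le> c * q ^ k" using geom[of k] enorm_nonneg[of n "mdiff (Y (Suc k)) (Y k)"] by linarith
    then show ?thesis using sq False by (auto simp: msquare_iff)
  qed
  then have summable: "summable (\<lambda>k. Y (Suc k) i j - Y k i j)" for i j
    using assms(2,3) by (intro summable_comparison_test[OF _ summable_mult[OF summable_geometric]]) auto
  have "(\<lambda>k. Y k i j) \<longlonglongrightarrow> Y 0 i j + (\<Sum>l. Y (Suc l) i j - Y l i j)" for i j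
  proof -
    have "(\<lambda>k. Y 0 i j + (\<Sum>l<k. Y (Suc l) i j - Y l i j)) \<longlonglongrightarrow> Y 0 i j + (\<Sum>l. Y (Suc l) i j - Y l i j)"
      using summable by (intro tendsto_add tendsto_const summable_LIMSEQ)
    then show ?thesis by (simp add: sum_lessThan_telescope[of "\<lambda>l. Y l i j"])
  qed
  then have "mtendsto sequentially Y (\<lambda>i j. Y 0 i j + (\<Sum>l. Y (Suc l) i j - Y l i j))"
    unfolding mtendsto_def by simp
  then show ?thesis by blast
qed

lemma mtendsto_msquare_limit:
  fixes Y :: "nat \<Rightarrow> 'a::{zero,t2_space} mat"
  assumes "\<And>k. msquare n (Y k)" and "mtendsto sequentially Y L"
  shows "msquare n L"
  unfolding msquare_iff
proof (intro allI impI)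
  fix i j
  assume "n \<le> i \<or> n \<le> j"
  then have "Y k i j = 0" for k using assms(1) by (auto simp: msquare_iff)
  moreover have "(\<lambda>k. Y k i j) \<longlonglongrightarrow> L i j" using assms(2) by (simp add: mtendsto_def)
  ultimately show "L i j = 0" by (simp add: LIMSEQ_const_iff)
qed

section \<open>Square roots and the C*-norm\<close>

primrec sqrt_iter :: "nat \<Rightarrow> 'a::cstar_algebra mat \<Rightarrow> nat \<Rightarrow> 'a mat" where
  "sqrt_iter n Z 0 = mzero"
| "sqrt_iter n Z (Suc k) = mscale (1/2) (madd Z (mmult n (sqrt_iter n Z k) (sqrt_iter n Z k)))"

lemma msquare_sqrt_iter: "msquare n Z \<Longrightarrow> msquare n (sqrt_iter n Z k)"
  by (induction k) (auto intro!: msquare_intros)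

lemma madj_sqrt_iter: "madj Z = Z \<Longrightarrow> madj (sqrt_iter n Z k) = sqrt_iter n Z k"
proof (induction k)
  case (Suc k)
  then show ?case by (simp only: sqrt_iter.simps madj_mscale madj_madd madj_mmult)
qed simp

lemma enorm_sqrt_iter: "enorm n Z \<le> 1/4 \<Longrightarrow> enorm n (sqrt_iter n Z k) \<le> 1/4"
proof (induction k)
  case (Suc k)
  let ?Y = "sqrt_iter n Z k"
  have Y: "enorm n ?Y \<le> 1/4" using Suc by simp
  have "enorm n (mmult n ?Y ?Y) \<le> enorm n ?Y * enorm n ?Y" by (rule enorm_mmult)
  also have "\<dots> \<le> 1/4 * (1/4)" using Y enorm_nonneg[of n ?Y] by (intro mult_mono) auto
  finally have YY: "enorm n (mmult n ?Y ?Y) \<le> 1/4 * (1/4)" .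
  have "enorm n (sqrt_iter n Z (Suc k)) = 1/2 * enorm n (madd Z (mmult n ?Y ?Y))"
    by (simp add: enorm_mscale)
  also have "\<dots> \<le> 1/2 * (enorm n Z + enorm n (mmult n ?Y ?Y))"
    by (intro mult_left_mono enorm_madd) auto
  also have "\<dots> \<le> 1/4" using YY Suc.prems by simp
  finally show ?case .
qed (simp add: enorm_def mzero_def)

lemma sqrt_iter_contractive:
  assumes "enorm n Z \<le> 1/4"
  shows "enorm n (mdiff (sqrt_iter n Z (Suc (Suc k))) (sqrt_iter n Z (Suc k)))
         \<le> 1/4 * enorm n (mdiff (sqrt_iter n Z (Suc k)) (sqrt_iter n Z k))"
proof -
  define Y Y' where "Y = sqrt_iter n Z k" and "Y' = sqrt_iter n Z (Suc k)"
  define D where "D = mdiff Y' Y"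
  have "mdiff (sqrt_iter n Z (Suc (Suc k))) Y' =
      mdiff (mscale (1/2) (madd Z (mmult n Y' Y'))) (mscale (1/2) (madd Z (mmult n Y Y)))"
    by (simp only: Y_def Y'_def sqrt_iter.simps)
  also have "\<dots> = mscale (1/2) (mdiff (mmult n Y' Y') (mmult n Y Y))"
    by (intro ext) (simp add: mscale_def madd_def mdiff_def algebra_simps)
  also have "mdiff (mmult n Y' Y') (mmult n Y Y) = madd (mmult n Y' D) (mmult n D Y)"
    unfolding D_def mmult_mdiff_left mmult_mdiff_right by (intro ext) (simp add: madd_def mdiff_def)
  finally have "enorm n (mdiff (sqrt_iter n Z (Suc (Suc k))) Y') \<le>
      1/2 * (enorm n Y' * enorm n D + enorm n D * enorm n Y)"
    using enorm_madd[of n "mmult n Y' D" "mmult n D Y"] enorm_mmult[of n Y' D] enorm_mmult[of n D Y]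
    by (simp add: enorm_mscale)
  also have "\<dots> \<le> 1/2 * (1/4 * enorm n D + enorm n D * (1/4))"
    using enorm_sqrt_iter[OF assms, of k] enorm_sqrt_iter[OF assms, of "Suc k"] enorm_nonneg[of n D]
    unfolding Y_def[symmetric] Y'_def[symmetric]
    by (intro mult_left_mono add_mono mult_right_mono) auto
  finally show ?thesis by (simp add: D_def Y_def Y'_def del: sqrt_iter.simps)
qed

lemma mpos_mone_mdiff:
  fixes Z :: "'a::cstar_algebra mat"
  assumes Z: "msquare n Z" "madj Z = Z" and small: "enorm n Z \<le> 1/4"
  shows "mpos n (mdiff (mone n) Z)"
proof -
  let ?Y = "sqrt_iter n Z"
  obtain L where L: "mtendsto sequentially ?Y L"
    using contractive_imp_mtendsto[of n ?Y "1/4"] msquare_sqrt_iter[OF Z(1)]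
      sqrt_iter_contractive[OF small] by auto
  have L_sq: "msquare n L" using mtendsto_msquare_limit[OF msquare_sqrt_iter[OF Z(1)] L] .
  have "mtendsto sequentially ?Y (madj L)"
    using mtendsto_madj[OF L] by (simp add: madj_sqrt_iter[OF Z(2)])
  then have L_adj: "madj L = L" using mtendsto_unique[OF sequentially_bot _ L] by blast
  have "(\<lambda>k. ?Y (Suc k) i j) \<longlonglongrightarrow> L i j" for i j
    using L unfolding mtendsto_def by (intro LIMSEQ_Suc[of "\<lambda>k. ?Y k i j"]) blast
  then have "mtendsto sequentially (\<lambda>k. ?Y (Suc k)) L"
    unfolding mtendsto_def by blast
  moreover have "mtendsto sequentially (\<lambda>k. ?Y (Suc k)) (mscale (1/2) (madd Z (mmult n L L)))"
    using L unfolding mtendsto_def by (auto simp: mscale_def madd_def mmult_def intro!: tendsto_intros)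
  ultimately have fix_L: "L = mscale (1/2) (madd Z (mmult n L L))"
    by (rule mtendsto_unique[OF sequentially_bot])
  have "mmult n (madj (mdiff (mone n) L)) (mdiff (mone n) L) = mdiff (mdiff (mone n) L) (mdiff L (mmult n L L))"
    using L_sq by (simp add: madj_mdiff L_adj mmult_mdiff_left mmult_mdiff_right msquare_mone)
  also have "\<dots> = mdiff (mone n) Z"
  proof (intro ext)
    fix i j
    have "L i j + L i j = Z i j + mmult n L L i j"
      using fun_cong[OF fun_cong[OF fix_L, of i], of j]
      by (simp add: mscale_def madd_def scaleR_add_left[symmetric])
    then show "mdiff (mdiff (mone n) L) (mdiff L (mmult n L L)) i j = mdiff (mone n) Z i j"
      unfolding mdiff_def by (simp add: algebra_simps)
  qed
  finally have "mmult n (madj (mdiff (mone n) L)) (mdiff (mone n) L) = mdiff (mone n) Z" .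
  then show ?thesis
    unfolding mpos_def using msquare_mdiff[OF msquare_mone L_sq] by metis
qed

lemma mle_mmult_madj_mscale_mone:
  fixes D :: "'a::cstar_algebra mat"
  assumes D: "msquare n D" and "0 < t" and t: "2 * enorm n D \<le> t"
  shows "mle n (mmult n (madj D) D) (mscale (t\<^sup>2) (mone n))"
proof -
  let ?Z = "mscale (1 / t\<^sup>2) (mmult n (madj D) D)"
  have "enorm n ?Z \<le> 1 / t\<^sup>2 * (enorm n D * enorm n D)"
    using enorm_mmult[of n "madj D" D] unfolding enorm_mscale enorm_madj by (simp add: divide_right_mono)
  also have "\<dots> \<le> 1 / t\<^sup>2 * (t / 2 * (t / 2))"
    using t enorm_nonneg[of n D] by (intro mult_left_mono mult_mono) auto
  also have "\<dots> = 1/4" using \<open>0 < t\<close> by (simp add: power2_eq_square)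
  finally have "mpos n (mdiff (mone n) ?Z)"
    using D by (intro mpos_mone_mdiff) (simp_all add: msquare_intros madj_mmult)
  then have "mpos n (mscale (t\<^sup>2) (mdiff (mone n) ?Z))" by (rule mpos_mscale[rotated]) simp
  moreover have "mscale (t\<^sup>2) (mdiff (mone n) ?Z) = mdiff (mscale (t\<^sup>2) (mone n)) (mmult n (madj D) D)"
    using \<open>0 < t\<close> by (auto intro!: ext simp: mscale_def mdiff_def scaleR_diff_right)
  ultimately show ?thesis by (simp add: mle_def)
qed

lemma mnorm_bounds:
  fixes D :: "'a::cstar_algebra mat"
  assumes "msquare n D"
  shows "0 \<le> mnorm n D" and "mnorm n D \<le> 2 * enorm n D"
proof -
  define S where "S = {t. 0 \<le> t \<and> mle n (mmult n (madj D) D) (mscale (t\<^sup>2) (mone n))}"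
  have mem: "t \<in> S" if "0 < t" "2 * enorm n D \<le> t" for t
    using mle_mmult_madj_mscale_mone[OF assms that] that by (simp add: S_def)
  have "S \<noteq> {}" using mem[of "2 * enorm n D + 1"] enorm_nonneg[of n D] by auto
  then show "0 \<le> mnorm n D"
    unfolding mnorm_def S_def[symmetric] by (rule cInf_greatest) (simp add: S_def)
  have "bdd_below S" by (auto simp: S_def bdd_below_def)
  then have "Inf S \<le> 2 * enorm n D + e" if "0 < e" for e
    using that enorm_nonneg[of n D] by (intro cInf_lower mem) auto
  then show "mnorm n D \<le> 2 * enorm n D"
    unfolding mnorm_def S_def[symmetric] by (rule field_le_epsilon)
qed

lemma tendsto_mnorm_mdiff:
  fixes P :: "'b \<Rightarrow> 'a::cstar_algebra mat"
  assumes "\<And>s. msquare n (P s)" and "msquare n A" and "mtendsto F P A"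
  shows "((\<lambda>s. mnorm n (mdiff (P s) A)) \<longlongrightarrow> 0) F"
proof (rule tendsto_sandwich[of "\<lambda>s. 0" _ _ "\<lambda>s. 2 * enorm n (mdiff (P s) A)"])
  have "msquare n (mdiff (P s) A)" for s using assms(1,2) by (rule msquare_mdiff)
  then show "\<forall>\<^sub>F s in F. 0 \<le> mnorm n (mdiff (P s) A)"
    and "\<forall>\<^sub>F s in F. mnorm n (mdiff (P s) A) \<le> 2 * enorm n (mdiff (P s) A)"
    by (simp_all add: mnorm_bounds)
  show "((\<lambda>s. 2 * enorm n (mdiff (P s) A)) \<longlongrightarrow> 0) F"
    using tendsto_mult_left[OF tendsto_enorm_mdiff[OF assms(3)], of 2] by simp
qed simp

section \<open>The rotation homotopy\<close>

definition mrot :: "nat \<Rightarrow> real \<Rightarrow> 'a::real_normed_algebra_1 mat" where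
  "mrot n \<theta> = blk n (mscale (cos \<theta>) (mone n)) (mscale (- sin \<theta>) (mone n))
                    (mscale (sin \<theta>) (mone n)) (mscale (cos \<theta>) (mone n))"

lemma mrot_zero: "mrot n 0 = (mone (n + n) :: 'a::real_normed_algebra_1 mat)"
  by (simp add: mrot_def mone_dsum dsum_eq_blk)

lemma mrot_add: "mmult (n + n) (mrot n a) (mrot n b) = (mrot n (a + b) :: 'a::real_normed_algebra_1 mat)"
  by (simp add: mrot_def mmult_blk msquare_intros cos_add sin_add algebra_simps)

lemma madj_mrot: "madj (mrot n \<theta>) = (mrot n (- \<theta>) :: 'a::cstar_algebra mat)"
  by (simp add: mrot_def madj_blk)

lemma munitary_mrot: "munitary (n + n) UNIV (mrot n \<theta> :: 'a::cstar_algebra mat)"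
proof -
  have "msquare (n + n) (mrot n \<theta> :: 'a mat)"
    unfolding mrot_def by (intro mat_in_blk mat_in_mscale_mone) auto
  then show ?thesis unfolding munitary_def madj_mrot mrot_add by (simp add: mrot_zero)
qed

lemma mat_in_multipliers_mrot: "opsys E \<Longrightarrow> mat_in (n + n) (multipliers E) (mrot n \<theta>)"
  unfolding mrot_def
  by (intro mat_in_blk mat_in_mscale_mone zero_in_multipliers of_real_in_multipliers)

lemma mconj_mrot_quarter:
  assumes "msquare n A" and "msquare n B"
  shows "mconj (n + n) (mrot n (pi / 2)) (dsum n n A B) = dsum n n B (A::'a::cstar_algebra mat)"
  using assms by (simp add: madj_mrot mrot_def dsum_eq_blk mmult_blk madj_blk)

lemma mtendsto_mrot:
  assumes "(f \<longlongrightarrow> \<theta>) F"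
  shows "mtendsto F (\<lambda>s. mrot n (f s)) (mrot n \<theta>)"
proof -
  have cos: "((\<lambda>s. cos (f s)) \<longlongrightarrow> cos \<theta>) F" and sin: "((\<lambda>s. sin (f s)) \<longlongrightarrow> sin \<theta>) F"
    using isCont_tendsto_compose[OF isCont_cos assms] isCont_tendsto_compose[OF isCont_sin assms] .
  show ?thesis unfolding mrot_def by (intro mtendsto_blk mtendsto_mscale tendsto_minus cos sin)
qed

definition unitary_path :: "nat \<Rightarrow> 'a::cstar_algebra mat \<Rightarrow> real \<Rightarrow> 'a mat" where
  "unitary_path n u t = mconj (n + n) (mrot n (pi / 2 * t)) (dsum n n u (mone n))"

definition hform_path :: "nat \<Rightarrow> 'a::cstar_algebra mat \<Rightarrow> 'a mat \<Rightarrow> real \<Rightarrow> 'a mat" where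
  "hform_path n u x t = mconj (n + n) (unitary_path n u t) (dsum n n x (mone n))"

lemma munitary_unitary_path:
  assumes E: "opsys E" and u: "munitary n (multipliers E) u"
  shows "munitary (n + n) (multipliers E) (unitary_path n u t)"
proof -
  have "mat_in (n + n) (multipliers E) (dsum n n u (mone n))"
    using u by (intro mat_in_dsum mat_in_mone zero_in_multipliers[OF E] one_in_multipliers)
               (simp add: munitary_def)
  then have "mat_in (n + n) (multipliers E) (unitary_path n u t)"
    unfolding unitary_path_def madj_mrot
    by (intro mat_in_multipliers_mmult[OF E] mat_in_multipliers_mrot[OF E])
  moreover have "munitary (n + n) UNIV (unitary_path n u t)"
    unfolding unitary_path_def using u
    by (intro munitary_mconj munitary_mrot munitary_dsum munitary_mone)
       (simp add: munitary_iff_mat_in[of n "multipliers E"])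
  ultimately show ?thesis by (simp add: munitary_iff_mat_in[of _ "multipliers E"])
qed

lemma hform_gap_hform_path:
  "opsys E \<Longrightarrow> munitary n (multipliers E) u \<Longrightarrow> hform_gap E n x g \<Longrightarrow>
   hform_gap E (n + n) (hform_path n u x t) (min g 1)"
  unfolding hform_path_def by (intro hform_gap_mconj munitary_unitary_path hform_gap_dsum_mone)

lemma hform_path_0:
  "msquare n u \<Longrightarrow> msquare n x \<Longrightarrow> hform_path n u x 0 = dsum n n (mconj n u x) (mone n)"
  by (simp add: hform_path_def unitary_path_def mrot_zero mat_in_dsum mconj_dsum)

lemma hform_path_1:
  assumes "munitary n UNIV u" and "msquare n x"
  shows "hform_path n u x 1 = dsum n n x (mone n)"
  using assms by (simp add: hform_path_def unitary_path_def mconj_mrot_quarter mconj_dsum munitary_def)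

lemma mtendsto_hform_path: "mtendsto (at t within S) (hform_path n u x) (hform_path n u x t)"
  unfolding hform_path_def unitary_path_def
  by (intro mtendsto_mmult mtendsto_madj mtendsto_mrot mtendsto_const tendsto_intros)

lemma hequiv_hform_path:
  assumes E: "opsys E" and u: "munitary n (multipliers E) u" and x: "hform_gap E n x g"
  shows "hequiv E (n + n) (dsum n n (mconj n u x) (mone n)) (dsum n n x (mone n))"
  unfolding hequiv_def
proof (intro exI[of _ "hform_path n u x"] conjI ballI)
  have u_U: "munitary n UNIV u"
    using u by (simp add: munitary_iff_mat_in[of n "multipliers E"])
  have x_sq: "msquare n x" using x mat_in_msquare[of n E x] by (simp add: hform_gap_def)
  have path: "hform_gap E (n + n) (hform_path n u x t) (min g 1)" for t
    using hform_gap_hform_path[OF E u x] .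
  have path_sq: "msquare (n + n) (hform_path n u x t)" for t
    using path[of t] mat_in_msquare[of "n + n" E] by (simp add: hform_gap_def)
  show "hform_path n u x 0 = dsum n n (mconj n u x) (mone n)"
    using u_U x_sq by (simp add: hform_path_0 munitary_def)
  show "hform_path n u x 1 = dsum n n x (mone n)" using hform_path_1[OF u_U x_sq] .
  fix t
  show "hform_path n u x t \<in> H E (n + n)" using path by (auto simp: H_def)
  show "((\<lambda>s. mnorm (n + n) (mdiff (hform_path n u x s) (hform_path n u x t))) \<longlongrightarrow> 0)
        (at t within {0..1})"
    by (intro tendsto_mnorm_mdiff mtendsto_hform_path path_sq)
qed

theorem lemma3p11:
  fixes E :: "'a::cstar_algebra set" and n :: nat and u x :: "'a mat" and g :: real
  assumes "is_cstar_envelope E"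
    and "munitary n (multipliers E) u"
    and "hform_gap E n x g"
  shows "hform_gap E n (mmult n (mmult n u x) (madj u)) g
       \<and> hequiv E (2 * n) (dsum n n (mmult n (mmult n u x) (madj u)) (mone n)) (dsum n n x (mone n))"
proof -
  have E: "opsys E" using assms(1) by (simp add: is_cstar_envelope_def)
  show ?thesis
    using hform_gap_mconj[OF E assms(2,3)] hequiv_hform_path[OF E assms(2,3)] by (simp add: mult_2)
qed

end
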